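(* $$\sum _{n=0}^{\infty } \left( \frac{1}{16} \right)^{n} \binom{2 n}{n}^2 \frac{ H_n^{(2)}}{n + 1} = \frac{32 G}{\pi }+\frac{2 \pi }{3}-16 \ln (2).$$
   Context: $H_n^{(2)} = \sum_{j=1}^n \frac{1}{j^2}$ (with $H_0^{(2)}=0$), and $G = \sum_{n\ge 0}\frac{(-1)^n}{(2n+1)^2}$ is Catalan's constant. *)

theory Defs
  imports "HOL-Analysis.Analysis"
begin

definition harm2 :: "nat \<Rightarrow> real" where
  "harm2 n = (\<Sum>j=1..n. 1 / (real j)^2)"

definition catalan :: real where
  "catalan = (\<Sum>n. (-1)^n / (2 * real n + 1)^2)"

end

theory Submission
  imports Defs "HOL-Real_Asymp.Real_Asymp"
begin

text \<open>Write \<open>c n = (2n choose n) / 4^n\<close>, so that \<open>c (n+1) = c n (2n+1) / (2n+2)\<close>. Together with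
  \<open>H (n+1) = H n + 1/(n+1)\<^sup>2\<close> this gives the summation by parts formula
  \<open>\<Sum>n<N. c n\<^sup>2 H n / (n+1) = 4 N c N\<^sup>2 H N - 4 \<Sum>n<N. c (n+1)\<^sup>2 / (n+1)\<close>.
  By Wallis' product \<open>N c N\<^sup>2 \<longrightarrow> 1/pi\<close>, so the boundary term tends to \<open>2 pi / 3\<close>.

  The remaining series is an integral. The binomial series of \<open>(1 - sin\<^sup>2 x)\<^bsup>-1/2\<^esup>\<close> gives
  \<open>\<Sum>n. c (n+1) sin\<^bsup>2n+1\<^esup> x cos x = tan (x/2)\<close>, while integration by parts and Wallis' integrals give
  \<open>\<integral>\<^sub>0\<^bsup>pi/2\<^esup> (pi/2 - x) sin\<^bsup>2n+1\<^esup> x cos x dx = pi c (n+1) / (4 (n+1))\<close>. Integrating term by term,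
  the series equals \<open>4/pi\<close> times \<open>\<integral>\<^sub>0\<^bsup>pi/2\<^esup> (pi/2 - x) tan (x/2) dx\<close>. Finally
  \<open>x tan (x/2) = x / sin x - x cot x\<close>; integrating the arctan series in \<open>tan (x/2)\<close> term by term
  gives \<open>\<integral> x / sin x = 2 G\<close>, and \<open>\<integral> x cot x = (pi/2) ln 2\<close> follows from the duplication formula
  \<open>2x cot 2x = x cot x - x tan x\<close> combined with the reflection \<open>x \<mapsto> pi/2 - x\<close>.\<close>

section \<open>The central binomial ratio\<close>

definition central_binom_ratio :: "nat \<Rightarrow> real" where
  "central_binom_ratio n = real (2*n choose n) / 4^n"

lemma real_central_binomial_eq_fact: "real (2*n choose n) = fact (2*n) / fact n ^ 2"
  by (simp add: binomial_fact power2_eq_square mult_2)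

lemma central_binom_ratio_0 [simp]: "central_binom_ratio 0 = 1"
  by (simp add: central_binom_ratio_def)

lemma central_binom_ratio_pos: "central_binom_ratio n > 0"
  by (simp add: central_binom_ratio_def)

lemma central_binom_ratio_Suc:
  "central_binom_ratio (Suc n) = central_binom_ratio n * (2 * real n + 1) / (2 * real n + 2)"
proof -
  have "fact (2 * Suc n) = (2 * real n + 2) * (2 * real n + 1) * (fact (2*n) :: real)"
    by (simp add: algebra_simps)
  then show ?thesis
    unfolding central_binom_ratio_def real_central_binomial_eq_fact
    by (simp add: divide_simps) (simp add: algebra_simps power2_eq_square)
qed

lemma central_binom_ratio_eq_gchoose: "central_binom_ratio n = (-1)^n * ((-1/2 :: real) gchoose n)"
proof (induction n)
  case 0
  show ?case by simp
next
  case (Suc n)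
  have "(-1/2 :: real) gchoose Suc n = (-1/2 - real n) / (real n + 1) * ((-1/2) gchoose n)"
    using gbinomial_mult_1[of "-1/2 :: real" n] by (simp add: field_simps)
  then have "(-1)^Suc n * ((-1/2 :: real) gchoose Suc n)
      = (1/2 + real n) / (real n + 1) * ((-1)^n * ((-1/2) gchoose n))"
    by (simp add: algebra_simps)
  also have "\<dots> = central_binom_ratio (Suc n)"
    unfolding Suc.IH[symmetric] central_binom_ratio_Suc by (simp add: field_simps)
  finally show ?case ..
qed

lemma sums_central_binom_ratio_power:
  assumes "\<bar>y\<bar> < 1"
  shows "(\<lambda>n. central_binom_ratio n * y^n) sums (1 / sqrt (1 - y))"
proof -
  have "(\<lambda>n. ((-1/2 :: real) gchoose n) * (-y)^n) sums ((1 + - y) powr (-1/2))"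
    using assms by (intro gen_binomial_real) simp
  moreover have "(1 - y) powr (-1/2) = 1 / sqrt (1 - y)"
    using assms by (simp add: powr_minus_divide powr_half_sqrt)
  ultimately show ?thesis
    by (simp add: central_binom_ratio_eq_gchoose power_minus[of y] mult_ac)
qed

lemma harm2_Suc: "harm2 (Suc n) = harm2 n + 1 / (real n + 1)^2"
  unfolding harm2_def by (simp add: sum.cl_ivl_Suc add_ac)

lemma sum_central_binom_ratio_sq_harm2:
  "(\<Sum>n<N. central_binom_ratio n ^ 2 * harm2 n / (real n + 1)) =
     4 * real N * central_binom_ratio N ^ 2 * harm2 N
     - 4 * (\<Sum>n<N. central_binom_ratio (Suc n) ^ 2 / (real n + 1))"
proof (induction N)
  case 0
  show ?case by simp
next
  case (Suc N)
  define c where "c = central_binom_ratio N"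
  define c' where "c' = central_binom_ratio (Suc N)"
  have "4 * (real N + 1) * c' ^ 2 * harm2 (Suc N) - 4 * real N * c ^ 2 * harm2 N
      = c ^ 2 * harm2 N / (real N + 1) + 4 * (c' ^ 2 / (real N + 1))"
  proof -
    have "c' * (2 * real N + 2) = c * (2 * real N + 1)"
      by (simp add: c_def c'_def central_binom_ratio_Suc add_nonneg_eq_0_iff)
    then have "4 * (real N + 1)^2 * c' ^ 2 = c ^ 2 * (2 * real N + 1)^2"
      by algebra
    moreover have "real N + 1 > 0" by simp
    ultimately show ?thesis
      unfolding harm2_Suc by (simp add: divide_simps) algebra
  qed
  with Suc.IH show ?case by (simp add: c_def c'_def algebra_simps)
qed

lemma wallis_partial_prod:
  "(\<Prod>k=1..n. 4 * real k ^ 2 / (4 * real k ^ 2 - 1)) = 1 / ((2 * real n + 1) * central_binom_ratio n ^ 2)"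
proof (induction n)
  case 0
  show ?case by simp
next
  case (Suc n)
  have "central_binom_ratio n > 0" by (rule central_binom_ratio_pos)
  with Suc.IH show ?case
    by (simp add: prod.cl_ivl_Suc central_binom_ratio_Suc field_simps)
       (simp add: algebra_simps power2_eq_square)
qed

lemma tendsto_real_mult_central_binom_ratio_sq:
  "(\<lambda>n. real n * central_binom_ratio n ^ 2) \<longlonglongrightarrow> 1 / pi"
proof -
  have "(\<lambda>n. inverse (\<Prod>k=1..n. 4 * real k ^ 2 / (4 * real k ^ 2 - 1))) \<longlonglongrightarrow> inverse (pi / 2)"
    using wallis by (rule tendsto_inverse) simp
  then have "(\<lambda>n. (2 * real n + 1) * central_binom_ratio n ^ 2) \<longlonglongrightarrow> 2 / pi"
    unfolding wallis_partial_prod by simp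
  moreover have "(\<lambda>n. real n / (2 * real n + 1)) \<longlonglongrightarrow> 1 / 2"
    by real_asymp
  ultimately have "(\<lambda>n. (2 * real n + 1) * central_binom_ratio n ^ 2 * (real n / (2 * real n + 1)))
      \<longlonglongrightarrow> 2 / pi * (1 / 2)"
    by (rule tendsto_mult)
  moreover have "(2 * real n + 1) * central_binom_ratio n ^ 2 * (real n / (2 * real n + 1))
      = real n * central_binom_ratio n ^ 2" for n
    by (simp add: field_simps add_pos_pos)
  ultimately have "(\<lambda>n. real n * central_binom_ratio n ^ 2) \<longlonglongrightarrow> 2 / pi * (1 / 2)"
    by (simp only:)
  then show ?thesis by simp
qed

lemma harm2_tendsto: "harm2 \<longlonglongrightarrow> pi^2 / 6"
proof -
  have "harm2 = (\<lambda>N. \<Sum>n<N. 1 / (real n + 1)^2)"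
  proof
    show "harm2 N = (\<Sum>n<N. 1 / (real n + 1)^2)" for N
      by (induction N) (simp_all add: harm2_Suc, simp add: harm2_def)
  qed
  with inverse_squares_sums show ?thesis
    by (simp add: sums_def add.commute)
qed

section \<open>Integrals of powers of the sine\<close>

lemma has_integral_real_derivative:
  fixes f f' :: "real \<Rightarrow> real"
  assumes "a \<le> b" "\<And>x. x \<in> {a..b} \<Longrightarrow> (f has_real_derivative f' x) (at x)"
  shows "(f' has_integral (f b - f a)) {a..b}"
  using assms(1) by (rule fundamental_theorem_of_calculus)
    (use assms(2) in \<open>auto simp: has_real_derivative_iff_has_vector_derivative[symmetric]
       intro: has_field_derivative_at_within\<close>)

lemma DERIV_sin_power_Suc:
  "((\<lambda>t. sin t ^ Suc m) has_real_derivative real (Suc m) * sin t ^ m * cos t) (at t)"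
  using DERIV_power[OF DERIV_sin[of t], of "Suc m"] by (simp add: algebra_simps)

lemma has_integral_sin_power_Suc_Suc:
  assumes "((\<lambda>t. sin t ^ m) has_integral I) {0..pi/2}"
  shows "((\<lambda>t. sin t ^ Suc (Suc m)) has_integral (real (Suc m) / real (Suc (Suc m)) * I)) {0..pi/2}"
proof -
  have "((\<lambda>t. - (sin t ^ Suc m * cos t)) has_real_derivative
           real (Suc (Suc m)) * sin t ^ Suc (Suc m) - real (Suc m) * sin t ^ m) (at t)" for t
  proof -
    have D: "((\<lambda>t. - (sin t ^ Suc m * cos t)) has_real_derivative
        - (real (Suc m) * sin t ^ m * cos t * cos t + - sin t * sin t ^ Suc m)) (at t)"
      by (intro DERIV_minus DERIV_mult DERIV_sin_power_Suc DERIV_cos)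
    have "cos t * cos t = 1 - sin t ^ 2"
      using cos_squared_eq[of t] by (simp add: power2_eq_square)
    then have "real (Suc m) * sin t ^ m * cos t * cos t = real (Suc m) * sin t ^ m * (1 - sin t ^ 2)"
      by (simp only: mult.assoc)
    then have "- (real (Suc m) * sin t ^ m * cos t * cos t + - sin t * sin t ^ Suc m)
        = real (Suc (Suc m)) * sin t ^ Suc (Suc m) - real (Suc m) * sin t ^ m"
      by (simp add: algebra_simps power2_eq_square)
    then show ?thesis using D by simp
  qed
  then have "((\<lambda>t. real (Suc (Suc m)) * sin t ^ Suc (Suc m) - real (Suc m) * sin t ^ m)
      has_integral 0) {0..pi/2}"
    using has_integral_real_derivative[of 0 "pi/2" "\<lambda>t. - (sin t ^ Suc m * cos t)"] by simp
  then have "((\<lambda>t. (real (Suc (Suc m)) * sin t ^ Suc (Suc m) - real (Suc m) * sin t ^ m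
      + real (Suc m) * sin t ^ m) / real (Suc (Suc m)))
      has_integral (0 + real (Suc m) * I) / real (Suc (Suc m))) {0..pi/2}"
    by (intro has_integral_divide has_integral_add has_integral_mult_right assms)
  then show ?thesis by simp
qed

lemma has_integral_sin_power_even:
  "((\<lambda>t. sin t ^ (2*n)) has_integral (pi/2 * central_binom_ratio n)) {0..pi/2}"
proof (induction n)
  case 0
  show ?case using has_integral_const_real[of "1::real" 0 "pi/2"] by simp
next
  case (Suc n)
  have "2 * Suc n = Suc (Suc (2*n))" by simp
  moreover have "real (Suc (2*n)) / real (Suc (Suc (2*n))) * (pi/2 * central_binom_ratio n)
      = pi/2 * central_binom_ratio (Suc n)"
    unfolding central_binom_ratio_Suc by (simp add: field_simps)
  ultimately show ?case
    using has_integral_sin_power_Suc_Suc[OF Suc.IH] by (simp only:)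
qed

lemma has_integral_weighted_sin_power:
  assumes "((\<lambda>t. sin t ^ Suc m) has_integral I) {0..pi/2}"
  shows "((\<lambda>t. (pi/2 - t) * sin t ^ m * cos t) has_integral I / real (Suc m)) {0..pi/2}"
proof -
  have "((\<lambda>t. (pi/2 - t) * sin t ^ Suc m / real (Suc m)) has_real_derivative
           (pi/2 - t) * sin t ^ m * cos t - sin t ^ Suc m / real (Suc m)) (at t)" for t
  proof -
    have "((\<lambda>t. (pi/2 - t) * sin t ^ Suc m / real (Suc m)) has_real_derivative
        ((0 - 1) * sin t ^ Suc m + real (Suc m) * sin t ^ m * cos t * (pi/2 - t)) / real (Suc m)) (at t)"
      by (intro DERIV_cdivide DERIV_mult DERIV_sin_power_Suc DERIV_diff DERIV_const DERIV_ident)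
    then show ?thesis
      by (simp add: field_simps del: of_nat_Suc)
  qed
  then have "((\<lambda>t. (pi/2 - t) * sin t ^ m * cos t - sin t ^ Suc m / real (Suc m)) has_integral 0) {0..pi/2}"
    using has_integral_real_derivative[of 0 "pi/2" "\<lambda>t. (pi/2 - t) * sin t ^ Suc m / real (Suc m)"]
    by simp
  then have "((\<lambda>t. ((pi/2 - t) * sin t ^ m * cos t - sin t ^ Suc m / real (Suc m))
      + sin t ^ Suc m / real (Suc m)) has_integral (0 + I / real (Suc m))) {0..pi/2}"
    by (intro has_integral_add has_integral_divide assms)
  then show ?thesis by simp
qed

lemma has_integral_weighted_sin_power_odd:
  "((\<lambda>x. (pi/2 - x) * sin x ^ (2*n+1) * cos x)
    has_integral (pi/4 * central_binom_ratio (Suc n) / (real n + 1))) {0..pi/2}"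
proof -
  have "((\<lambda>x. sin x ^ Suc (2*n+1)) has_integral pi/2 * central_binom_ratio (Suc n)) {0..pi/2}"
    using has_integral_sin_power_even[of "Suc n"] by simp
  from has_integral_weighted_sin_power[OF this] show ?thesis
    by (simp add: field_simps)
qed

section \<open>The tangent of the half angle\<close>

lemma tan_half_eq_one_minus_cos_div_sin:
  fixes x :: real
  assumes "sin x \<noteq> 0"
  shows "tan (x/2) = (1 - cos x) / sin x"
proof -
  have "tan (x/2) = sin x / (cos x + 1)"
    using tan_half[of "x/2"] by simp
  moreover have "cos x + 1 \<noteq> 0"
  proof
    assume "cos x + 1 = 0"
    then have "cos x = -1" by linarith
    then have "sin x ^ 2 = 0" using sin_squared_eq[of x] by simp
    with assms show False by simp
  qed
  moreover have "sin x / (cos x + 1) = sin x ^ 2 / ((cos x + 1) * sin x)"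
    using assms by (simp add: power2_eq_square)
  moreover have "sin x ^ 2 = (1 - cos x) * (cos x + 1)"
    by (simp add: sin_squared_eq power2_eq_square algebra_simps)
  ultimately show ?thesis
    by simp
qed

lemma sin_eq_tan_half:
  fixes x :: real
  assumes "cos (x/2) \<noteq> 0"
  shows "sin x = 2 * tan (x/2) / (1 + tan (x/2)^2)"
proof -
  have "sin x = 2 * sin (x/2) * cos (x/2)"
    using sin_double[of "x/2"] by simp
  then show ?thesis
    using assms by (simp add: tan_sec tan_def field_simps power2_eq_square power_inverse)
qed

lemma tan_half_bounds:
  assumes "x \<in> {0..pi/2}"
  shows "0 \<le> tan (x/2)" "tan (x/2) \<le> 1"
proof -
  from assms pi_gt_zero have x: "-(pi/2) < 0" "0 \<le> x/2" "x/2 \<le> pi/4" "pi/4 < pi/2"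
    by (auto simp del: pi_gt_zero)
  have "tan 0 \<le> tan (x/2)" "tan (x/2) \<le> tan (pi/4)"
    by (intro tan_mono_le; use x in linarith)+
  then show "0 \<le> tan (x/2)" "tan (x/2) \<le> 1"
    by (simp_all add: tan_45)
qed

lemma DERIV_tan_half:
  assumes "cos (x/2) \<noteq> 0"
  shows "((\<lambda>x. tan (x/2)) has_real_derivative (1 + tan (x/2)^2) / 2) (at x)"
proof -
  have "((\<lambda>x. tan (x/2)) has_real_derivative inverse (cos (x/2) ^ 2) * (1/2)) (at x)"
    by (rule DERIV_chain2[where g="\<lambda>x. x/2", OF DERIV_tan[OF assms]])
      (auto intro!: derivative_eq_intros)
  then show ?thesis
    using tan_sec[OF assms] by (simp add: power_inverse)
qed

lemma has_integral_tan: "(tan has_integral ln 2 / 2) {0..pi/4}"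
proof -
  have "((\<lambda>x. - ln (cos x)) has_real_derivative tan x) (at x)" if "x \<in> {0..pi/4}" for x
  proof -
    have "cos x > 0" by (rule cos_gt_zero_pi) (use that pi_gt_zero in \<open>auto simp del: pi_gt_zero\<close>)
    then show ?thesis by (auto intro!: derivative_eq_intros simp: tan_def)
  qed
  then have "(tan has_integral (- ln (cos (pi/4)) - - ln (cos 0))) {0..pi/4}"
    by (intro has_integral_real_derivative) auto
  then show ?thesis by (simp add: cos_45 ln_div ln_sqrt)
qed

lemma has_integral_tan_half: "((\<lambda>x. tan (x/2)) has_integral ln 2) {0..pi/2}"
proof -
  have "((\<lambda>x. - 2 * ln (cos (x/2))) has_real_derivative tan (x/2)) (at x)" if "x \<in> {0..pi/2}" for x
  proof -
    have "cos (x/2) > 0" by (rule cos_gt_zero_pi) (use that pi_gt_zero in \<open>auto simp del: pi_gt_zero\<close>)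
    then show ?thesis by (auto intro!: derivative_eq_intros simp: tan_def)
  qed
  then have "((\<lambda>x. tan (x/2)) has_integral (- 2 * ln (cos (pi/4)) - - 2 * ln (cos 0))) {0..pi/2}"
    using has_integral_real_derivative[of 0 "pi/2" "\<lambda>x. - 2 * ln (cos (x/2))"] by simp
  then show ?thesis by (simp add: cos_45 ln_div ln_sqrt)
qed

section \<open>The integral of x cot x\<close>

definition x_div_sin :: "real \<Rightarrow> real" where
  "x_div_sin x = (if x = 0 then 1 else x / sin x)"

definition x_cot :: "real \<Rightarrow> real" where
  "x_cot x = x_div_sin x * cos x"

lemma isCont_x_div_sin:
  assumes "\<bar>x\<bar> < pi"
  shows "isCont x_div_sin x"
proof -
  define sinc :: "real \<Rightarrow> real" where "sinc = (\<lambda>z. if z = 0 then 1 else sin z / z)"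
  have "isCont sinc x"
  proof (cases "x = 0")
    case True
    then show ?thesis
      using DERIV_isCont[OF has_field_derivative_sin_z_over_z[of UNIV]] by (simp add: sinc_def)
  next
    case False
    have "\<forall>\<^sub>F z in nhds x. sinc z = sin z / z"
      using t1_space_nhds[OF False] by eventually_elim (simp add: sinc_def)
    moreover have "isCont (\<lambda>z. sin z / z) x"
      using False by (intro continuous_intros) auto
    ultimately show ?thesis by (simp add: isCont_cong)
  qed
  moreover have "sinc x \<noteq> 0"
    using sin_eq_0_pi[of x] assms by (auto simp: sinc_def abs_less_iff)
  moreover have "x_div_sin = (\<lambda>z. inverse (sinc z))"
    by (auto simp: x_div_sin_def sinc_def)
  ultimately show ?thesis
    using continuous_at_within_inverse[of x UNIV sinc] by simp
qed

lemma continuous_on_x_div_sin: "continuous_on {0..pi/2} x_div_sin"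
  by (intro continuous_at_imp_continuous_on ballI isCont_x_div_sin)
    (use pi_gt_zero in \<open>auto simp del: pi_gt_zero\<close>)

lemma continuous_on_x_cot: "continuous_on {0..pi/2} x_cot"
  unfolding x_cot_def by (intro continuous_intros continuous_on_x_div_sin)

lemma x_cot_eq: "x \<noteq> 0 \<Longrightarrow> x_cot x = x * cos x / sin x"
  by (simp add: x_cot_def x_div_sin_def)

lemma x_cot_double:
  assumes "x \<in> {0..pi/4}"
  shows "x_cot (2*x) = x_cot x - x * tan x"
proof (cases "x = 0")
  case True
  then show ?thesis by (simp add: x_cot_def x_div_sin_def)
next
  case False
  with assms pi_gt_zero have "cos x > 0" "sin x > 0"
    by (auto intro!: cos_gt_zero_pi sin_gt_zero)
  have "x_cot (2*x) = 2*x * cos (2*x) / sin (2*x)"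
    using False by (intro x_cot_eq) simp
  also have "\<dots> = 2*x * (cos x ^ 2 - sin x ^ 2) / (2 * sin x * cos x)"
    by (simp only: sin_double cos_double)
  also have "\<dots> = x * cos x / sin x - x * (sin x / cos x)"
    using \<open>cos x > 0\<close> \<open>sin x > 0\<close> by (simp add: field_simps power2_eq_square)
  finally show ?thesis
    using False by (simp add: x_cot_eq tan_def)
qed

lemma x_cot_reflect:
  assumes "x \<in> {0..pi/4}"
  shows "x_cot (pi/2 - x) = (pi/2 - x) * tan x"
proof -
  have "x < pi/2" using assms pi_gt_zero by (auto simp del: pi_gt_zero)
  then show ?thesis by (simp add: x_cot_eq cos_diff sin_diff tan_def)
qed

lemma has_integral_x_cot_upper_half:
  assumes "((\<lambda>x. x * tan x) has_integral B) {0..pi/4}"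
  shows "(x_cot has_integral (pi/4 * ln 2 - B)) {pi/4..pi/2}"
proof -
  have "((\<lambda>x. pi/2 * tan x - x * tan x) has_integral (pi/2 * (ln 2 / 2) - B)) {0..pi/4}"
    by (intro has_integral_diff has_integral_mult_right has_integral_tan assms)
  moreover have "pi/2 * (ln 2 / 2) - B = pi/4 * ln 2 - B"
    by simp
  ultimately have "((\<lambda>x. pi/2 * tan x - x * tan x) has_integral (pi/4 * ln 2 - B)) {0..pi/4}"
    by (simp only:)
  then have "((\<lambda>x. x_cot (pi/2 - x)) has_integral (pi/4 * ln 2 - B)) {0..pi/4}"
    by (rule has_integral_eq[rotated]) (simp_all add: x_cot_reflect algebra_simps)
  then have "((\<lambda>x. x_cot (- x)) has_integral (pi/4 * ln 2 - B)) {- (pi/2)..- (pi/4)}"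
    using has_integral_shift_real_ivl[of "\<lambda>x. x_cot (pi/2 - x)" _ 0 "pi/4" "pi/2"] by simp
  then show ?thesis
    by (simp only: has_integral_reflect_real)
qed

lemma has_integral_x_cot_double:
  assumes "(x_cot has_integral A) {0..pi/4}" "((\<lambda>x. x * tan x) has_integral B) {0..pi/4}"
  shows "(x_cot has_integral (2 * (A - B))) {0..pi/2}"
proof -
  have "((\<lambda>x. 2 *\<^sub>R x_cot (2 * x)) has_integral integral {2*0..2*(pi/4)} x_cot) {0..pi/4}"
    by (rule has_integral_substitution[where c=0 and d="pi/2"])
      (auto intro!: derivative_eq_intros continuous_on_x_cot)
  then have "((\<lambda>x. 2 * x_cot (2 * x)) has_integral integral {0..pi/2} x_cot) {0..pi/4}"
    by simp
  moreover have "((\<lambda>x. 2 * x_cot (2 * x)) has_integral (2 * (A - B))) {0..pi/4}"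
  proof -
    have "((\<lambda>x. 2 * (x_cot x - x * tan x)) has_integral (2 * (A - B))) {0..pi/4}"
      by (intro has_integral_mult_right has_integral_diff assms)
    then show ?thesis by (rule has_integral_eq[rotated]) (simp add: x_cot_double)
  qed
  ultimately have "integral {0..pi/2} x_cot = 2 * (A - B)"
    by (rule has_integral_unique)
  with integrable_integral[OF integrable_continuous_interval[OF continuous_on_x_cot]]
  show ?thesis by simp
qed

lemma has_integral_x_cot: "(x_cot has_integral (pi/2 * ln 2)) {0..pi/2}"
proof -
  have "continuous_on {0..pi/4} (\<lambda>x. x * tan x)"
  proof (intro continuous_at_imp_continuous_on ballI)
    fix x :: real assume "x \<in> {0..pi/4}"
    then have "cos x \<noteq> 0"
      using cos_gt_zero_pi[of x] pi_gt_zero by auto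
    then show "isCont (\<lambda>x. x * tan x) x" by (intro continuous_intros)
  qed
  then obtain B where B: "((\<lambda>x. x * tan x) has_integral B) {0..pi/4}"
    using integrable_continuous_interval by blast
  have "continuous_on {0..pi/4} x_cot"
    by (rule continuous_on_subset[OF continuous_on_x_cot]) auto
  then obtain A where A: "(x_cot has_integral A) {0..pi/4}"
    using integrable_continuous_interval by blast
  have "(x_cot has_integral (A + (pi/4 * ln 2 - B))) {0..pi/2}"
    using A has_integral_x_cot_upper_half[OF B] pi_gt_zero
    by (intro has_integral_combine[of 0 "pi/4" "pi/2"]) auto
  moreover have "(x_cot has_integral (2 * (A - B))) {0..pi/2}"
    by (rule has_integral_x_cot_double[OF A B])
  ultimately have "A + (pi/4 * ln 2 - B) = 2 * (A - B)"
    by (rule has_integral_unique)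
  then have "2 * (A - B) = pi/2 * ln 2"
    by (simp add: field_simps; linarith)
  then show ?thesis
    using has_integral_x_cot_double[OF A B] by (simp only:)
qed

section \<open>The integral of x / sin x\<close>

lemma catalan_sums: "(\<lambda>k. (-1)^k / (2 * real k + 1)^2) sums catalan"
proof -
  have "summable (\<lambda>k. (-1)^k * (1 / (2 * real k + 1)^2))"
  proof (rule summable_Leibniz'(1))
    show "(\<lambda>k. 1 / (2 * real k + 1)^2) \<longlonglongrightarrow> 0" by real_asymp
    show "0 \<le> 1 / (2 * real k + 1)^2" for k by simp
    show "1 / (2 * real (Suc k) + 1)^2 \<le> 1 / (2 * real k + 1)^2" for k
      by (intro divide_left_mono power_mono) auto
  qed
  then show ?thesis unfolding catalan_def by (simp add: summable_sums)
qed

lemma alternating_sum_bounds: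
  fixes a :: "nat \<Rightarrow> real"
  assumes "\<And>n. 0 \<le> a n" "\<And>n. a (Suc n) \<le> a n"
  shows "0 \<le> (\<Sum>k<N. (-1)^k * a k) \<and> (\<Sum>k<N. (-1)^k * a k) \<le> a 0"
  using assms
proof (induction N arbitrary: a)
  case 0
  then show ?case by simp
next
  case (Suc N)
  have "0 \<le> (\<Sum>k<N. (-1)^k * a (Suc k)) \<and> (\<Sum>k<N. (-1)^k * a (Suc k)) \<le> a 1"
    using Suc.IH[of "\<lambda>k. a (Suc k)"] Suc.prems by auto
  moreover have "(\<Sum>k<Suc N. (-1)^k * a k) = a 0 - (\<Sum>k<N. (-1)^k * a (Suc k))"
    by (subst sum.lessThan_Suc_shift) (simp add: sum_negf)
  ultimately show ?case using Suc.prems(1)[of 0] Suc.prems(2)[of 0] by auto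
qed

text \<open>With \<open>t = tan (x/2)\<close> one has \<open>x / sin x = (1 + t\<^sup>2) arctan t / t\<close>; these are the
  terms of the arctan series multiplied out.\<close>

definition x_div_sin_term :: "nat \<Rightarrow> real \<Rightarrow> real" where
  "x_div_sin_term k x = (-1)^k * tan (x/2) ^ (2*k) * (1 + tan (x/2)^2) / (2 * real k + 1)"

lemma has_integral_x_div_sin_term:
  "(x_div_sin_term k has_integral (2 * (-1)^k / (2 * real k + 1)^2)) {0..pi/2}"
proof -
  define d where "d = 2 * real k + 1"
  have "d > 0" by (simp add: d_def)
  define F where "F x = 2 * (-1)^k * tan (x/2) ^ Suc (2*k) / d^2" for x
  have "(F has_real_derivative x_div_sin_term k x) (at x)" if "x \<in> {0..pi/2}" for x
  proof -
    have "cos (x/2) > 0" by (rule cos_gt_zero_pi) (use that pi_gt_zero in \<open>auto simp del: pi_gt_zero\<close>)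
    moreover have "real (Suc (2*k)) = d" by (simp add: d_def)
    ultimately have "((\<lambda>x. tan (x/2) ^ Suc (2*k)) has_real_derivative
        d * ((1 + tan (x/2)^2) / 2 * tan (x/2) ^ (2*k))) (at x)"
      using DERIV_power[OF DERIV_tan_half, of x "Suc (2*k)"] by (simp only: diff_Suc_Suc diff_zero)
    then have "(F has_real_derivative
        2 * (-1)^k * (d * ((1 + tan (x/2)^2) / 2 * tan (x/2) ^ (2*k))) / d^2) (at x)"
      unfolding F_def[abs_def] by (intro DERIV_cdivide DERIV_cmult)
    moreover have "2 * (-1)^k * (d * ((1 + tan (x/2)^2) / 2 * tan (x/2) ^ (2*k))) / d^2
        = x_div_sin_term k x"
      unfolding x_div_sin_term_def d_def[symmetric]
      using \<open>d > 0\<close> by (simp add: field_simps power2_eq_square)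
    ultimately show ?thesis by (simp only:)
  qed
  then have "(x_div_sin_term k has_integral (F (pi/2) - F 0)) {0..pi/2}"
    by (intro has_integral_real_derivative) auto
  then show ?thesis by (simp add: F_def d_def tan_45)
qed

lemma sums_x_div_sin_term:
  assumes "x \<in> {0..pi/2}"
  shows "(\<lambda>k. x_div_sin_term k x) sums x_div_sin x"
proof (cases "x = 0")
  case True
  then have "(\<lambda>k. x_div_sin_term k x) = (\<lambda>k. if k = 0 then 1 else 0)"
    by (auto simp: x_div_sin_term_def)
  with True show ?thesis
    using sums_single[of 0 "\<lambda>_. 1::real"] by (simp add: x_div_sin_def)
next
  case False
  define t where "t = tan (x/2)"
  have t: "0 \<le> t" "t \<le> 1"
    using tan_half_bounds[OF assms] by (simp_all add: t_def)
  have "cos (x/2) > 0" by (rule cos_gt_zero_pi) (use assms pi_gt_zero in \<open>auto simp del: pi_gt_zero\<close>)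
  then have "sin x = 2 * t / (1 + t^2)"
    unfolding t_def by (intro sin_eq_tan_half) simp
  moreover have "arctan t = x/2"
    unfolding t_def using assms pi_gt_zero by (intro arctan_tan) (auto simp del: pi_gt_zero)
  ultimately have "(1 + t^2) / t * arctan t = x_div_sin x"
    using False by (auto simp: x_div_sin_def field_simps)
  moreover have "(\<lambda>k. (-1)^k * (1 / real (k*2+1) * t ^ (k*2+1))) sums arctan t"
    using summable_arctan_series[of t] arctan_series[of t] t by (simp add: sums_iff)
  then have "(\<lambda>k. (1 + t^2) / t * ((-1)^k * (1 / real (k*2+1) * t ^ (k*2+1)))) sums ((1 + t^2) / t * arctan t)"
    by (rule sums_mult)
  moreover have "t \<noteq> 0"
    using \<open>sin x = 2 * t / (1 + t^2)\<close> False sin_eq_0_pi[of x] assms pi_gt_zero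
    by (auto simp del: pi_gt_zero)
  then have "(1 + t^2) / t * ((-1)^k * (1 / real (k*2+1) * t ^ (k*2+1))) = x_div_sin_term k x" for k
  proof -
    define d where "d = 2 * real k + 1"
    have "t ^ (k*2+1) = t ^ (2*k) * t" "real (k*2+1) = d" "d > 0"
      by (simp_all add: d_def power_add mult.commute)
    then show ?thesis
      using \<open>t \<noteq> 0\<close> by (simp add: x_div_sin_term_def t_def[symmetric] d_def[symmetric] field_simps)
  qed
  ultimately show ?thesis by simp
qed

lemma abs_sum_x_div_sin_term_le:
  assumes "x \<in> {0..pi/2}"
  shows "\<bar>\<Sum>k<N. x_div_sin_term k x\<bar> \<le> 1 + tan (x/2)^2"
proof -
  define t where "t = tan (x/2)"
  define a where "a k = t ^ (2*k) / (2 * real k + 1)" for k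
  have t: "0 \<le> t" "t \<le> 1"
    using tan_half_bounds[OF assms] by (simp_all add: t_def)
  have "a (Suc k) \<le> a k" for k
    unfolding a_def using t by (intro frac_le power_decreasing) auto
  moreover have "0 \<le> a k" for k
    using t by (simp add: a_def)
  ultimately have "0 \<le> (\<Sum>k<N. (-1)^k * a k) \<and> (\<Sum>k<N. (-1)^k * a k) \<le> 1"
    using alternating_sum_bounds[of a N] by (simp add: a_def)
  moreover have "(\<Sum>k<N. x_div_sin_term k x) = (1 + t^2) * (\<Sum>k<N. (-1)^k * a k)"
    by (simp add: x_div_sin_term_def a_def t_def sum_distrib_left algebra_simps)
  ultimately show ?thesis
    by (simp add: abs_mult t_def[symmetric] mult_le_cancel_left1 add_pos_nonneg)
qed

lemma has_integral_x_div_sin: "(x_div_sin has_integral (2 * catalan)) {0..pi/2}"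
proof -
  define f where "f N x = (\<Sum>k<N. x_div_sin_term k x)" for N x
  have int_f: "(f N has_integral (\<Sum>k<N. 2 * (-1)^k / (2 * real k + 1)^2)) {0..pi/2}" for N
    unfolding f_def[abs_def] by (intro has_integral_sum has_integral_x_div_sin_term) auto
  have "continuous_on {0..pi/2} (\<lambda>x. 1 + tan (x/2)^2)"
  proof (intro continuous_at_imp_continuous_on ballI)
    fix x :: real assume "x \<in> {0..pi/2}"
    then have "cos (x/2) \<noteq> 0"
      using cos_gt_zero_pi[of "x/2"] pi_gt_zero by (auto simp del: pi_gt_zero)
    then show "isCont (\<lambda>x. 1 + tan (x/2)^2) x" by (intro continuous_intros) auto
  qed
  then have int_bound: "(\<lambda>x. 1 + tan (x/2)^2) integrable_on {0..pi/2}"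
    by (rule integrable_continuous_interval)
  have "(\<lambda>N. integral {0..pi/2} (f N)) \<longlonglongrightarrow> integral {0..pi/2} x_div_sin"
    by (rule dominated_convergence(2)[where h="\<lambda>x. 1 + tan (x/2)^2"])
      (use int_bound int_f abs_sum_x_div_sin_term_le sums_x_div_sin_term
        in \<open>auto simp: f_def sums_def\<close>)
  moreover have "(\<lambda>N. integral {0..pi/2} (f N)) \<longlonglongrightarrow> 2 * catalan"
    using sums_mult[OF catalan_sums, of 2] integral_unique[OF int_f] by (simp add: sums_def)
  ultimately have "integral {0..pi/2} x_div_sin = 2 * catalan"
    by (rule LIMSEQ_unique)
  moreover have "x_div_sin integrable_on {0..pi/2}"
    using continuous_on_x_div_sin by (rule integrable_continuous_interval)
  ultimately show ?thesis
    using has_integral_integral by metis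
qed

section \<open>The series of squared central binomial ratios\<close>

lemma x_div_sin_minus_x_cot:
  assumes "x \<in> {0..pi/2}"
  shows "x_div_sin x - x_cot x = x * tan (x/2)"
proof (cases "x = 0")
  case True
  then show ?thesis by (simp add: x_cot_def x_div_sin_def)
next
  case False
  with assms pi_gt_zero have "sin x > 0"
    by (intro sin_gt_zero) (auto simp del: pi_gt_zero)
  with False show ?thesis
    by (simp add: x_cot_eq x_div_sin_def tan_half_eq_one_minus_cos_div_sin diff_divide_distrib right_diff_distrib)
qed

lemma has_integral_weighted_tan_half:
  "((\<lambda>x. (pi/2 - x) * tan (x/2)) has_integral (pi * ln 2 - 2 * catalan)) {0..pi/2}"
proof -
  have "((\<lambda>x. pi/2 * tan (x/2) - (x_div_sin x - x_cot x))
      has_integral (pi/2 * ln 2 - (2 * catalan - pi/2 * ln 2))) {0..pi/2}"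
    by (intro has_integral_diff has_integral_mult_right has_integral_tan_half
        has_integral_x_div_sin has_integral_x_cot)
  then have "((\<lambda>x. (pi/2 - x) * tan (x/2)) has_integral (pi/2 * ln 2 - (2 * catalan - pi/2 * ln 2))) {0..pi/2}"
    by (rule has_integral_eq[rotated]) (simp add: x_div_sin_minus_x_cot algebra_simps)
  then show ?thesis by (simp add: algebra_simps)
qed

lemma sums_central_binom_ratio_sin_power:
  assumes "x \<in> {0..<pi/2}"
  shows "(\<lambda>n. central_binom_ratio (Suc n) * (sin x ^ (2*n+1) * cos x)) sums tan (x/2)"
proof (cases "x = 0")
  case True
  then show ?thesis by simp
next
  case False
  define s c where "s = sin x" and "c = cos x"
  from assms False pi_gt_zero have "s > 0" "c > 0"
    unfolding s_def c_def by (auto intro!: sin_gt_zero cos_gt_zero_pi simp del: pi_gt_zero)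
  have "1 - s^2 = c^2" by (simp add: s_def c_def cos_squared_eq)
  moreover have "c^2 > 0" using \<open>c > 0\<close> by simp
  ultimately have "s^2 < 1" by linarith
  then have "\<bar>s^2\<bar> < 1" by simp
  moreover have "sqrt (1 - s^2) = c"
    using \<open>1 - s^2 = c^2\<close> \<open>c > 0\<close> by simp
  ultimately have "(\<lambda>n. central_binom_ratio n * (s^2)^n) sums (1 / c)"
    using sums_central_binom_ratio_power[of "s^2"] by simp
  then have "(\<lambda>n. central_binom_ratio (Suc n) * (s^2)^Suc n) sums (1 / c - 1)"
    by (subst sums_Suc_iff) simp
  then have "(\<lambda>n. c / s * (central_binom_ratio (Suc n) * (s^2)^Suc n)) sums (c / s * (1 / c - 1))"
    by (rule sums_mult)
  moreover have "c / s * (central_binom_ratio (Suc n) * (s^2)^Suc n)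
      = central_binom_ratio (Suc n) * (s ^ (2*n+1) * c)" for n
    using \<open>s > 0\<close> by (simp add: field_simps power_mult power_add power2_eq_square)
  moreover have "c / s * (1 / c - 1) = tan (x/2)"
    using \<open>s > 0\<close> \<open>c > 0\<close> by (simp add: s_def c_def tan_half_eq_one_minus_cos_div_sin field_simps)
  ultimately show ?thesis by (simp add: s_def c_def)
qed

lemma sums_weighted_tan_half:
  assumes "x \<in> {0..pi/2}"
  shows "(\<lambda>n. central_binom_ratio (Suc n) * ((pi/2 - x) * sin x ^ (2*n+1) * cos x))
    sums ((pi/2 - x) * tan (x/2))"
proof (cases "x = pi/2")
  case True
  show ?thesis unfolding True by simp
next
  case False
  with assms have "x \<in> {0..<pi/2}" by auto
  from sums_mult[OF sums_central_binom_ratio_sin_power[OF this], of "pi/2 - x"]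
  show ?thesis by (simp add: mult_ac)
qed

lemma sums_integral_nonneg_series:
  fixes f :: "nat \<Rightarrow> 'a::euclidean_space \<Rightarrow> real"
  assumes int_f: "\<And>n. (f n has_integral I n) S"
    and nonneg: "\<And>n x. x \<in> S \<Longrightarrow> 0 \<le> f n x"
    and sums: "\<And>x. x \<in> S \<Longrightarrow> (\<lambda>n. f n x) sums g x"
    and int_g: "g integrable_on S"
  shows "I sums integral S g"
proof -
  define F where "F k x = (\<Sum>n<k. f n x)" for k x
  have int_F: "(F k has_integral (\<Sum>n<k. I n)) S" for k
    unfolding F_def[abs_def] by (intro has_integral_sum int_f) auto
  have F_le: "F k x \<le> g x" if "x \<in> S" for k x
    using sums[OF that] nonneg[OF that] unfolding F_def
    by (metis sums_summable sums_unique sum_le_suminf finite_lessThan)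
  have "g integrable_on S \<and> (\<lambda>k. integral S (F k)) \<longlonglongrightarrow> integral S g"
  proof (rule monotone_convergence_increasing)
    show "F k integrable_on S" for k
      using int_F by blast
    show "F k x \<le> F (Suc k) x" if "x \<in> S" for k x
      using nonneg[OF that] by (simp add: F_def)
    show "(\<lambda>k. F k x) \<longlonglongrightarrow> g x" if "x \<in> S" for x
      using sums[OF that] by (simp add: F_def sums_def)
    have "integral S (F k) \<in> {0..integral S g}" for k
      using int_F[of k] int_g F_le nonneg
      by (auto intro!: integral_nonneg integral_le sum_nonneg simp: F_def)
    then show "bounded (range (\<lambda>k. integral S (F k)))"
      by (intro bounded_subset[OF compact_imp_bounded[OF compact_Icc[of 0 "integral S g"]]]) auto
  qed
  then show ?thesis
    using integral_unique[OF int_F] by (simp add: sums_def)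
qed

lemma sums_central_binom_ratio_sq:
  "(\<lambda>n. central_binom_ratio (Suc n)^2 / (real n + 1)) sums (4 * ln 2 - 8 * catalan / pi)"
proof -
  have "(\<lambda>n. pi/4 * (central_binom_ratio (Suc n)^2 / (real n + 1)))
      sums integral {0..pi/2} (\<lambda>x. (pi/2 - x) * tan (x/2))"
  proof (rule sums_integral_nonneg_series[OF _ _ sums_weighted_tan_half])
    show "((\<lambda>x. central_binom_ratio (Suc n) * ((pi/2 - x) * sin x ^ (2*n+1) * cos x))
        has_integral pi/4 * (central_binom_ratio (Suc n)^2 / (real n + 1))) {0..pi/2}" for n
      using has_integral_mult_right[OF has_integral_weighted_sin_power_odd[of n],
          of "central_binom_ratio (Suc n)"]
      by (simp add: field_simps power2_eq_square)
    show "0 \<le> central_binom_ratio (Suc n) * ((pi/2 - x) * sin x ^ (2*n+1) * cos x)"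
      if "x \<in> {0..pi/2}" for n x
      using that pi_gt_zero central_binom_ratio_pos[of "Suc n"]
      by (auto intro!: mult_nonneg_nonneg sin_ge_zero cos_ge_zero simp del: pi_gt_zero)
  qed (use has_integral_weighted_tan_half in blast)+
  moreover have "integral {0..pi/2} (\<lambda>x. (pi/2 - x) * tan (x/2)) = pi * ln 2 - 2 * catalan"
    by (rule integral_unique[OF has_integral_weighted_tan_half])
  moreover have "pi * ln 2 - 2 * catalan = pi/4 * (4 * ln 2 - 8 * catalan / pi)"
    by (simp add: field_simps)
  ultimately have "(\<lambda>n. pi/4 * (central_binom_ratio (Suc n)^2 / (real n + 1)))
      sums (pi/4 * (4 * ln 2 - 8 * catalan / pi))"
    by (simp only:)
  then show ?thesis
    by (subst (asm) sums_mult_iff) auto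
qed

theorem mainTheorem7:
  shows "(\<lambda>n. (1/16)^n * (real (2*n choose n))^2 * harm2 n / (real n + 1))
           sums (32 * catalan / pi + 2 * pi / 3 - 16 * ln 2)"
proof -
  have summand: "(1/16)^n * (real (2*n choose n))^2 * harm2 n / (real n + 1)
      = central_binom_ratio n ^ 2 * harm2 n / (real n + 1)" for n
  proof -
    have "(16::real)^n = (4^n)^2" by (simp add: power2_eq_square flip: power_mult_distrib)
    then show ?thesis by (simp add: central_binom_ratio_def power_divide)
  qed
  have "(\<lambda>N. 4 * (real N * central_binom_ratio N ^ 2) * harm2 N
      - 4 * (\<Sum>n<N. central_binom_ratio (Suc n)^2 / (real n + 1)))
      \<longlonglongrightarrow> 4 * (1/pi) * (pi^2/6) - 4 * (4 * ln 2 - 8 * catalan / pi)"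
    using sums_central_binom_ratio_sq unfolding sums_def
    by (intro tendsto_intros tendsto_real_mult_central_binom_ratio_sq harm2_tendsto)
  moreover have "4 * (1/pi) * (pi^2/6) - 4 * (4 * ln 2 - 8 * catalan / pi)
      = 32 * catalan / pi + 2 * pi / 3 - 16 * ln 2"
    by (simp add: field_simps power2_eq_square)
  ultimately have "(\<lambda>N. 4 * real N * central_binom_ratio N ^ 2 * harm2 N
      - 4 * (\<Sum>n<N. central_binom_ratio (Suc n)^2 / (real n + 1)))
      \<longlonglongrightarrow> 32 * catalan / pi + 2 * pi / 3 - 16 * ln 2"
    by (simp only: mult.assoc)
  then show ?thesis
    unfolding sums_def summand sum_central_binom_ratio_sq_harm2 .
qed

end
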